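(* Assume (A1)–(A4), let $0\le\upsilon\le\sigma/2$ with $\upsilon<\sigma_\lambda$, let $\eta<\frac1{4B}$ and $\delta=4B^2$, and let $(x_t,\lambda_t)$ be generated by CSOA. Then for every $T\ge1$ and every $\lambda\in\mathbb R^N_+$, $$\sum_{t=1}^T\mathbb E\big[F(x_t)-F(x^\star_\upsilon)\big]-\Big(2B^2\eta T+\frac1{2\eta}\Big)\|\lambda\|^2+\sum_{t=1}^T\mathbb E\big[\langle\lambda,\mathbf H(x_t)+\upsilon\mathbf 1\rangle\big]\le\frac{D^2}{2\eta}+P\eta T,$$ where $P:=B^2+4N\sigma_\lambda^2$ and $B=\max(\sigma_f,\sigma_h\sqrt N)$.
   Context: Setting: $\mathcal X\subseteq\mathbb R^m$ nonempty convex compact; $\theta$ a random vector; $f,h_1,\dots,h_N$ proper, closed, convex and differentiable in $x$; $F(x)=\mathbb E f(x,\theta)$, $H_i(x)=\mathbb E h_i(x,\theta)$, $\mathbf H=(H_i)_i$, $\mathbf 1$ all-ones vector. For $\upsilon\ge0$, $x^\star_\upsilon$ denotes an optimal solution of the conservative problem $\min_{x\in\mathcal X}F(x)$ s.t. $H_i(x)+\upsilon\le0$ for all $i$. For $\eta,\delta>0$, $\hat{\mathcal L}(x,\lambda,\theta)=f(x,\theta)+\sum_i\lambda_i(h_i(x,\theta)+\upsilon)-\frac{\delta\eta}2\|\lambda\|^2$. $\theta_1,\theta_2,\dots$ i.i.d. copies of $\theta$; expectations are over all of them. CSOA: $x_1\in\mathcal X$ arbitrary, $\lambda_1=0$; $x_{t+1}=P_{\mathcal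 X}[x_t-\eta\nabla_x\hat{\mathcal L}(x_t,\lambda_t,\theta_t)]$, $\lambda_{i,t+1}=[(1-\eta^2\delta)\lambda_{i,t}+\eta(h_i(x_t,\theta_t)+\upsilon)]_+$ ($P_{\mathcal X}$ Euclidean projection, $[\cdot]_+$ positive part). (A1) $\mathbb E\|\nabla f(x,\theta)\|^2\le\sigma_f^2$, $\mathbb E\|\nabla h_i(x,\theta)\|^2\le\sigma_h^2$ on $\mathcal X$. (A2) $\mathbb E[h_i(x,\theta)^2]\le\sigma_\lambda^2$ on $\mathcal X$. (A3) $\mathrm{diam}(\mathcal X)\le D$ and $\mathcal X\subset\mathrm{relint}(\mathrm{dom}f\cap\bigcap_i\mathrm{dom}h_i)$. (A4) There are $\tilde x\in\mathcal X$, $\sigma>0$ with $H_i(\tilde x)+\sigma\le0$ for all $i$. *)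

theory Defs
  imports "HOL-Probability.Probability"
begin

definition expfun :: "'b measure \<Rightarrow> ('a \<Rightarrow> 'b \<Rightarrow> real) \<Rightarrow> 'a \<Rightarrow> real" where
  "expfun Th g x = (\<integral>th. g x th \<partial>Th)"

text \<open>Index shift: csoa ... t = (x_(t+1), lambda_(t+1)),
  and the sample used in step t (0-based) is ths t (= theta_(t+1) in the paper).
  The gradient of the regularised Lagrangian in x is gf x th + sum_i lambda_i gh i x th.\<close>
primrec csoa ::
  "'a::euclidean_space set \<Rightarrow> ('a \<Rightarrow> 'b \<Rightarrow> 'a) \<Rightarrow> ('i::finite \<Rightarrow> 'a \<Rightarrow> 'b \<Rightarrow> real)
   \<Rightarrow> ('i \<Rightarrow> 'a \<Rightarrow> 'b \<Rightarrow> 'a) \<Rightarrow> real \<Rightarrow> real \<Rightarrow> real \<Rightarrow> 'a \<Rightarrow> (nat \<Rightarrow> 'b) \<Rightarrow> nat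
   \<Rightarrow> 'a \<times> (real^'i)" where
  "csoa X gf h gh \<eta> \<delta> \<upsilon> x1 ths 0 = (x1, 0)"
| "csoa X gf h gh \<eta> \<delta> \<upsilon> x1 ths (Suc t) =
     (let (x, l) = csoa X gf h gh \<eta> \<delta> \<upsilon> x1 ths t; th = ths t in
       (closest_point X (x - \<eta> *\<^sub>R (gf x th + (\<Sum>i\<in>UNIV. (l $ i) *\<^sub>R gh i x th))),
        \<chi> i. max 0 ((1 - \<eta>\<^sup>2 * \<delta>) * (l $ i) + \<eta> * (h i x th + \<upsilon>))))"

end

(* Let z_t = (x_t, l_t) be the iterates and V(x, l) = |x - xstar|^2 + |l - lam|^2.  A CSOA step is
   a projected descent/ascent step on the regularised Lagrangian L.  Nonexpansiveness of the
   projection, the gradient inequality for the convex f and h_i, and an exact expansion of the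
   dual update give, pathwise,
     V(z_{t+1}) <= V(z_t) - 2 eta (L(x_t, lam, theta_t) - L(xstar, l_t, theta_t)) + eta^2 G_t,
   where G_t is quadratic in the sampled gradients, the constraint values and |l_t|.  Since
   theta_t is independent of z_t, taking expectations replaces the samples by F and H; feasibility
   of xstar makes the l_t-part of L(xstar, l_t) nonpositive, and delta = 4 B^2 makes the
   regulariser cancel the |l_t|^2-growth of E G_t exactly.  Summing the telescoping expected
   inequalities over t < T and using V(z_1) <= D^2 + |lam|^2 gives the bound. *)

theory Submission
  imports Defs
begin

lemma convex_on_has_derivative_imp_above_tangent:
  fixes g :: "'a::real_normed_vector \<Rightarrow> real"
  assumes cv: "convex_on X g" and X: "convex X" and x: "x \<in> X" and y: "y \<in> X"
    and d: "(g has_derivative g') (at x)"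
  shows "g x + g' (y - x) \<le> g y"
proof -
  define \<phi> where "\<phi> s = g (x + s *\<^sub>R (y - x))" for s :: real
  have "((\<lambda>s::real. x + s *\<^sub>R (y - x)) has_derivative (\<lambda>s. s *\<^sub>R (y - x))) (at 0)"
    by (auto intro!: derivative_eq_intros)
  from has_derivative_compose[OF this] d
  have "(\<phi> has_derivative (\<lambda>s. g' (s *\<^sub>R (y - x)))) (at 0)"
    unfolding \<phi>_def by simp
  moreover have "(\<lambda>s. g' (s *\<^sub>R (y - x))) = (*) (g' (y - x))"
    using d by (auto simp: has_derivative_def linear_simps)
  ultimately have "(\<phi> has_field_derivative g' (y - x)) (at 0)"
    by (simp add: has_field_derivative_def)
  then have lim: "((\<lambda>s. (\<phi> s - \<phi> 0) / (s - 0)) \<longlongrightarrow> g' (y - x)) (at_right 0)"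
    unfolding has_field_derivative_iff by (blast intro: tendsto_mono at_le)
  have "eventually (\<lambda>s. s \<in> {0<..<1}) (at_right (0::real))"
    by (rule eventually_at_right_real) simp
  then have "eventually (\<lambda>s. (\<phi> s - \<phi> 0) / (s - 0) \<le> g y - g x) (at_right 0)"
  proof eventually_elim
    case (elim s)
    have "g ((1 - s) *\<^sub>R x + s *\<^sub>R y) \<le> (1 - s) * g x + s * g y"
      using elim x y cv by (intro convex_onD) auto
    moreover have "(1 - s) *\<^sub>R x + s *\<^sub>R y = x + s *\<^sub>R (y - x)"
      by (simp add: algebra_simps)
    ultimately show ?case
      using elim by (simp add: \<phi>_def field_simps)
  qed
  then have "g' (y - x) \<le> g y - g x"
    by (rule tendsto_upperbound[OF lim]) (simp add: trivial_limit_at_right_real)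
  then show ?thesis by simp
qed

lemma convex_on_gradient_abs_diff_le:
  fixes g :: "'a::real_inner \<Rightarrow> real"
  assumes cv: "convex_on X g" and X: "convex X" and x: "x \<in> X" and y: "y \<in> X"
    and dx: "(g has_derivative (\<lambda>v. gx \<bullet> v)) (at x)"
    and dy: "(g has_derivative (\<lambda>v. gy \<bullet> v)) (at y)"
  shows "\<bar>g y - g x\<bar> \<le> norm (y - x) * (norm gx + norm gy)"
proof -
  have "g x + gx \<bullet> (y - x) \<le> g y"
    by (rule convex_on_has_derivative_imp_above_tangent[OF cv X x y dx])
  moreover have "g y + gy \<bullet> (x - y) \<le> g x"
    by (rule convex_on_has_derivative_imp_above_tangent[OF cv X y x dy])
  moreover have "\<bar>gx \<bullet> (y - x)\<bar> \<le> norm gx * norm (y - x)" "\<bar>gy \<bullet> (x - y)\<bar> \<le> norm gy * norm (y - x)"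
    using Cauchy_Schwarz_ineq2 norm_minus_commute by metis+
  ultimately show ?thesis by (simp add: algebra_simps abs_le_iff)
qed

lemma closest_point_step_le:
  fixes X :: "'a::euclidean_space set"
  assumes "convex X" "closed X" "z \<in> X"
  shows "(norm (closest_point X (x - \<eta> *\<^sub>R g) - z))\<^sup>2
           \<le> (norm (x - z))\<^sup>2 + 2 * \<eta> * (g \<bullet> (z - x)) + \<eta>\<^sup>2 * (norm g)\<^sup>2"
proof -
  have "dist (closest_point X (x - \<eta> *\<^sub>R g)) (closest_point X z) \<le> dist (x - \<eta> *\<^sub>R g) z"
    using assms by (intro closest_point_lipschitz) auto
  then have "(norm (closest_point X (x - \<eta> *\<^sub>R g) - z))\<^sup>2 \<le> (norm (x - \<eta> *\<^sub>R g - z))\<^sup>2"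
    using assms(3) by (simp add: closest_point_self dist_norm power_mono)
  also have "\<dots> = (norm (x - z))\<^sup>2 + 2 * \<eta> * (g \<bullet> (z - x)) + \<eta>\<^sup>2 * (norm g)\<^sup>2"
    by (simp only: power2_norm_eq_inner)
       (simp add: inner_diff_left inner_diff_right inner_commute algebra_simps power2_eq_square)
  finally show ?thesis .
qed

lemma power2_norm_vec: "(norm (v::real^'i::finite))\<^sup>2 = (\<Sum>i\<in>UNIV. (v$i)\<^sup>2)"
  by (simp only: power2_norm_eq_inner) (simp add: inner_vec_def power2_eq_square)

lemma power2_norm_add_le: "(norm (a + b :: 'a::real_normed_vector))\<^sup>2 \<le> 2 * (norm a)\<^sup>2 + 2 * (norm b)\<^sup>2"
proof -
  have "(norm (a + b))\<^sup>2 \<le> (norm a + norm b)\<^sup>2"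
    by (simp add: norm_triangle_ineq power_mono)
  also have "\<dots> \<le> 2 * (norm a)\<^sup>2 + 2 * (norm b)\<^sup>2"
    using sum_squares_ge_zero[of "norm a - norm b" 0] by (simp add: power2_eq_square algebra_simps)
  finally show ?thesis .
qed

lemma power2_norm_sum_scaleR_le:
  fixes l :: "real^'i::finite" and v :: "'i \<Rightarrow> 'a::real_normed_vector"
  assumes "\<And>i. 0 \<le> l$i"
  shows "(norm (\<Sum>i\<in>UNIV. l$i *\<^sub>R v i))\<^sup>2 \<le> (norm l)\<^sup>2 * (\<Sum>i\<in>UNIV. (norm (v i))\<^sup>2)"
proof -
  define b :: "real^'i" where "b = (\<chi> i. norm (v i))"
  have "norm (\<Sum>i\<in>UNIV. l$i *\<^sub>R v i) \<le> (\<Sum>i\<in>UNIV. norm (l$i *\<^sub>R v i))" by (rule norm_sum)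
  also have "\<dots> = l \<bullet> b" using assms by (simp add: b_def inner_vec_def)
  also have "\<dots> \<le> norm l * norm b" by (rule norm_cauchy_schwarz)
  finally have "(norm (\<Sum>i\<in>UNIV. l$i *\<^sub>R v i))\<^sup>2 \<le> (norm l * norm b)\<^sup>2" by (simp add: power_mono)
  also have "\<dots> = (norm l)\<^sup>2 * (\<Sum>i\<in>UNIV. (norm (v i))\<^sup>2)"
    by (simp add: power_mult_distrib power2_norm_vec b_def)
  finally show ?thesis .
qed

text \<open>Expanding the square, only the term \<open>\<eta>\<^sup>2 \<delta> (l - \<mu>)\<^sup>2 \<ge> 0\<close> is dropped and the squared
  dual gradient \<open>(a + \<upsilon> - \<eta> \<delta> l)\<^sup>2\<close> is bounded crudely.\<close>
lemma projected_ascent_step_le: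
  fixes l \<mu> a \<upsilon> \<eta> \<delta> :: real
  assumes "0 \<le> \<mu>" "0 \<le> \<delta>"
  shows "(max 0 ((1 - \<eta>\<^sup>2 * \<delta>) * l + \<eta> * (a + \<upsilon>)) - \<mu>)\<^sup>2
     \<le> (l - \<mu>)\<^sup>2 - 2 * \<eta> * ((\<mu> - l) * (a + \<upsilon>) - \<delta> * \<eta> / 2 * (\<mu>\<^sup>2 - l\<^sup>2))
        + \<eta>\<^sup>2 * (4 * a\<^sup>2 + 4 * \<upsilon>\<^sup>2 + 2 * \<delta>\<^sup>2 * \<eta>\<^sup>2 * l\<^sup>2)"
proof -
  define s where "s = (1 - \<eta>\<^sup>2 * \<delta>) * l + \<eta> * (a + \<upsilon>)"
  define g where "g = a + \<upsilon> - \<eta> * \<delta> * l"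
  have "(max 0 s - \<mu>)\<^sup>2 \<le> (s - \<mu>)\<^sup>2"
    using assms(1) by (cases "s \<le> 0") (auto simp: max_def abs_le_square_iff[symmetric])
  also have "(s - \<mu>)\<^sup>2
      = (l - \<mu>)\<^sup>2 - 2 * \<eta> * ((\<mu> - l) * (a + \<upsilon>) - \<delta> * \<eta> / 2 * (\<mu>\<^sup>2 - l\<^sup>2)) + \<eta>\<^sup>2 * g\<^sup>2
        - \<eta>\<^sup>2 * \<delta> * (l - \<mu>)\<^sup>2"
    unfolding s_def g_def by (simp add: power2_eq_square field_simps)
  also have "\<dots> \<le> (l - \<mu>)\<^sup>2 - 2 * \<eta> * ((\<mu> - l) * (a + \<upsilon>) - \<delta> * \<eta> / 2 * (\<mu>\<^sup>2 - l\<^sup>2)) + \<eta>\<^sup>2 * g\<^sup>2"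
    using assms(2) by simp
  also have "g\<^sup>2 \<le> 4 * a\<^sup>2 + 4 * \<upsilon>\<^sup>2 + 2 * \<delta>\<^sup>2 * \<eta>\<^sup>2 * l\<^sup>2"
  proof -
    have "g\<^sup>2 \<le> 2 * (a + \<upsilon>)\<^sup>2 + 2 * (\<eta> * \<delta> * l)\<^sup>2"
      using power2_norm_add_le[of "a + \<upsilon>" "- (\<eta> * \<delta> * l)"] by (simp add: g_def)
    moreover have "(a + \<upsilon>)\<^sup>2 \<le> 2 * a\<^sup>2 + 2 * \<upsilon>\<^sup>2"
      using power2_norm_add_le[of a \<upsilon>] by simp
    ultimately show ?thesis by (simp add: power_mult_distrib mult.commute mult.left_commute)
  qed
  finally show ?thesis
    unfolding s_def by (simp add: mult_left_mono)
qed

lemma projected_ascent_step_vec_le: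
  fixes l \<mu> :: "real^'i::finite" and a :: "'i \<Rightarrow> real"
  assumes "\<And>i. 0 \<le> \<mu>$i" "0 \<le> \<delta>"
  shows "(norm ((\<chi> i. max 0 ((1 - \<eta>\<^sup>2 * \<delta>) * l$i + \<eta> * (a i + \<upsilon>))) - \<mu>))\<^sup>2
     \<le> (norm (l - \<mu>))\<^sup>2 - 2 * \<eta> * (\<Sum>i\<in>UNIV. (\<mu>$i - l$i) * (a i + \<upsilon>) - \<delta> * \<eta> / 2 * ((\<mu>$i)\<^sup>2 - (l$i)\<^sup>2))
        + \<eta>\<^sup>2 * (\<Sum>i\<in>UNIV. 4 * (a i)\<^sup>2 + 4 * \<upsilon>\<^sup>2 + 2 * \<delta>\<^sup>2 * \<eta>\<^sup>2 * (l$i)\<^sup>2)"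
proof -
  define A where "A i = (\<mu>$i - l$i) * (a i + \<upsilon>) - \<delta> * \<eta> / 2 * ((\<mu>$i)\<^sup>2 - (l$i)\<^sup>2)" for i
  define R where "R i = 4 * (a i)\<^sup>2 + 4 * \<upsilon>\<^sup>2 + 2 * \<delta>\<^sup>2 * \<eta>\<^sup>2 * (l$i)\<^sup>2" for i
  have "(norm ((\<chi> i. max 0 ((1 - \<eta>\<^sup>2 * \<delta>) * l$i + \<eta> * (a i + \<upsilon>))) - \<mu>))\<^sup>2
      = (\<Sum>i\<in>UNIV. (max 0 ((1 - \<eta>\<^sup>2 * \<delta>) * l$i + \<eta> * (a i + \<upsilon>)) - \<mu>$i)\<^sup>2)"
    by (simp add: power2_norm_vec)
  also have "\<dots> \<le> (\<Sum>i\<in>UNIV. (l$i - \<mu>$i)\<^sup>2 - 2 * \<eta> * A i + \<eta>\<^sup>2 * R i)"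
    unfolding A_def R_def using assms by (intro sum_mono projected_ascent_step_le)
  also have "\<dots> = (norm (l - \<mu>))\<^sup>2 - 2 * \<eta> * sum A UNIV + \<eta>\<^sup>2 * sum R UNIV"
    by (simp add: power2_norm_vec sum.distrib sum_subtractf sum_distrib_left)
  finally show ?thesis unfolding A_def R_def .
qed

lemma integrable_nonneg_nn_integral_le:
  fixes u :: "'a \<Rightarrow> real"
  assumes "u \<in> borel_measurable N" "\<And>t. 0 \<le> u t" "(\<integral>\<^sup>+t. ennreal (u t) \<partial>N) \<le> ennreal c" "0 \<le> c"
  shows "integrable N u" "integral\<^sup>L N u \<le> c"
proof -
  have "(\<integral>\<^sup>+t. ennreal (u t) \<partial>N) < \<infinity>"
    using assms(3) by (rule order.strict_trans1) simp
  then show i: "integrable N u"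
    using assms(1,2) by (intro integrableI_nonneg) auto
  have "ennreal (integral\<^sup>L N u) \<le> ennreal c"
    using nn_integral_eq_integral[OF i] assms(2,3) by simp
  then show "integral\<^sup>L N u \<le> c" using assms(4) by (simp add: ennreal_le_iff)
qed

lemma borel_measurable_fst_borel: "fst \<in> borel_measurable (borel :: ('a::topological_space \<times> 'b::topological_space) measure)"
  by (intro borel_measurable_continuous_onI continuous_on_fst continuous_on_id)

lemma borel_measurable_snd_borel: "snd \<in> borel_measurable (borel :: ('a::topological_space \<times> 'b::topological_space) measure)"
  by (intro borel_measurable_continuous_onI continuous_on_snd continuous_on_id)

lemma borel_measurable_vec_nth:
  fixes u :: "'a \<Rightarrow> real^'i::finite"
  assumes "u \<in> borel_measurable N"
  shows "(\<lambda>p. u p $ i) \<in> borel_measurable N"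
proof -
  have "(\<lambda>p. u p \<bullet> axis i 1) \<in> borel_measurable N" using assms by measurable
  then show ?thesis by (simp add: inner_axis)
qed

lemma borel_measurable_vec_lambda:
  fixes u :: "'i::finite \<Rightarrow> 'a \<Rightarrow> real"
  assumes "\<And>i. u i \<in> borel_measurable N"
  shows "(\<lambda>p. \<chi> i. u i p) \<in> borel_measurable N"
proof (subst borel_measurable_euclidean_space, intro ballI)
  fix b :: "real^'i" assume "b \<in> Basis"
  then obtain i where b: "b = axis i 1" by (auto simp: Basis_vec_def)
  show "(\<lambda>p. (\<chi> i. u i p) \<bullet> b) \<in> borel_measurable N"
    using assms by (simp add: b inner_axis)
qed

lemma measurable_pair_fst_borel:
  assumes "(\<lambda>q. G (fst q) (snd q)) \<in> measurable (borel \<Otimes>\<^sub>M N) K"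
  shows "(\<lambda>p. G (fst (fst p)) (snd p)) \<in> measurable ((borel :: ('a::topological_space \<times> 'b::topological_space) measure) \<Otimes>\<^sub>M N) K"
proof -
  have "(\<lambda>p. (fst (fst p), snd p)) \<in> measurable ((borel :: ('a \<times> 'b) measure) \<Otimes>\<^sub>M N) (borel \<Otimes>\<^sub>M N)"
    by (intro measurable_Pair measurable_compose[OF measurable_fst borel_measurable_fst_borel] measurable_snd)
  from measurable_compose[OF this assms] show ?thesis by simp
qed

lemma (in prob_space) nn_integral_indep_var:
  assumes indep: "indep_var S X T Y"
    and X: "X \<in> measurable M S" and Y: "Y \<in> measurable M T"
    and G: "G \<in> borel_measurable (S \<Otimes>\<^sub>M T)"
  shows "(\<integral>\<^sup>+\<omega>. G (X \<omega>, Y \<omega>) \<partial>M) = (\<integral>\<^sup>+\<omega>. (\<integral>\<^sup>+y. G (X \<omega>, y) \<partial>distr M T Y) \<partial>M)"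
proof -
  interpret Y: prob_space "distr M T Y" by (rule prob_space_distr[OF Y])
  have "(\<integral>\<^sup>+\<omega>. G (X \<omega>, Y \<omega>) \<partial>M) = integral\<^sup>N (distr M (S \<Otimes>\<^sub>M T) (\<lambda>\<omega>. (X \<omega>, Y \<omega>))) G"
    by (rule nn_integral_distr[symmetric]) (use X Y G in auto)
  also have "\<dots> = integral\<^sup>N (distr M S X \<Otimes>\<^sub>M distr M T Y) G"
    using indep unfolding indep_var_distribution_eq by simp
  also have "\<dots> = (\<integral>\<^sup>+ x. \<integral>\<^sup>+ y. G (x, y) \<partial>distr M T Y \<partial>distr M S X)"
    by (rule Y.nn_integral_fst[symmetric])
       (use G in \<open>simp add: measurable_cong_sets[OF sets_pair_measure_cong[OF sets_distr sets_distr] refl]\<close>)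
  also have "\<dots> = (\<integral>\<^sup>+\<omega>. (\<integral>\<^sup>+ y. G (X \<omega>, y) \<partial>distr M T Y) \<partial>M)"
    by (rule nn_integral_distr[OF X])
       (use Y.borel_measurable_nn_integral[of "\<lambda>x y. G (x, y)" S] G in
         \<open>simp add: measurable_cong_sets[OF sets_pair_measure_cong[OF refl sets_distr] refl]\<close>)
  finally show ?thesis .
qed

text \<open>A quantity computed from the samples before time \<open>t\<close> is independent of the sample at
  time \<open>t\<close>, which can therefore be integrated out first.\<close>
lemma (in prob_space) nn_integral_indep_next_sample:
  fixes \<theta> :: "nat \<Rightarrow> 'a \<Rightarrow> 'b"
  assumes \<theta>_meas: "\<And>t. \<theta> t \<in> measurable M Th"
    and indep: "indep_vars (\<lambda>_. Th) \<theta> UNIV"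
    and distr: "distr M Th (\<theta> t) = Th"
    and \<Phi>: "\<Phi> \<in> measurable (PiM {..<t} (\<lambda>_. Th)) N"
    and G: "G \<in> borel_measurable (N \<Otimes>\<^sub>M Th)"
  shows "(\<integral>\<^sup>+\<omega>. G (\<Phi> (restrict (\<lambda>k. \<theta> k \<omega>) {..<t}), \<theta> t \<omega>) \<partial>M)
       = (\<integral>\<^sup>+\<omega>. (\<integral>\<^sup>+th. G (\<Phi> (restrict (\<lambda>k. \<theta> k \<omega>) {..<t}), th) \<partial>Th) \<partial>M)"
proof -
  let ?S = "PiM {..<t} (\<lambda>_. Th)" and ?T = "PiM {t} (\<lambda>_. Th)"
  let ?X1 = "\<lambda>\<omega>. restrict (\<lambda>k. \<theta> k \<omega>) {..<t}" and ?X2 = "\<lambda>\<omega>. restrict (\<lambda>k. \<theta> k \<omega>) {t}"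
  \<comment> \<open>\<open>indep_var\<close> needs both variables in the same type, hence \<open>\<theta> t\<close> is taken as a function on \<open>{t}\<close>.\<close>
  define G' where "G' p = G (\<Phi> (fst p), snd p t)" for p
  have m1: "?X1 \<in> measurable M ?S" and m2: "?X2 \<in> measurable M ?T"
    by (intro measurable_restrict \<theta>_meas)+
  have c: "(\<lambda>r. r t) \<in> measurable ?T Th"
    by (intro measurable_component_singleton) auto
  have "(\<lambda>p. (\<Phi> (fst p), snd p t)) \<in> measurable (?S \<Otimes>\<^sub>M ?T) (N \<Otimes>\<^sub>M Th)"
    by (intro measurable_Pair measurable_compose[OF measurable_fst \<Phi>] measurable_compose[OF measurable_snd c])
  from measurable_compose[OF this G]
  have G'm: "G' \<in> borel_measurable (?S \<Otimes>\<^sub>M ?T)"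
    unfolding G'_def by simp
  have inner_eq: "(\<integral>\<^sup>+s. G' (r, s) \<partial>distr M ?T ?X2) = (\<integral>\<^sup>+th. G (\<Phi> r, th) \<partial>Th)"
    if "r \<in> space ?S" for r
  proof -
    have Gr: "(\<lambda>th. G (\<Phi> r, th)) \<in> borel_measurable Th"
      using measurable_Pair2[OF G] measurable_space[OF \<Phi> that] by simp
    have "(\<integral>\<^sup>+s. G' (r, s) \<partial>distr M ?T ?X2) = (\<integral>\<^sup>+\<omega>. G (\<Phi> r, \<theta> t \<omega>) \<partial>M)"
      using measurable_compose[OF c Gr] by (simp add: G'_def nn_integral_distr[OF m2])
    also have "\<dots> = (\<integral>\<^sup>+th. G (\<Phi> r, th) \<partial>distr M Th (\<theta> t))"
      using Gr by (simp add: nn_integral_distr[OF \<theta>_meas])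
    finally show ?thesis using distr by simp
  qed
  have "indep_var ?S ?X1 ?T ?X2"
    by (rule indep_var_restrict[OF indep]) auto
  from nn_integral_indep_var[OF this m1 m2 G'm]
  have "(\<integral>\<^sup>+\<omega>. G' (?X1 \<omega>, ?X2 \<omega>) \<partial>M) = (\<integral>\<^sup>+\<omega>. (\<integral>\<^sup>+th. G (\<Phi> (?X1 \<omega>), th) \<partial>Th) \<partial>M)"
    by (simp add: inner_eq measurable_space[OF m1] cong: nn_integral_cong)
  then show ?thesis by (simp add: G'_def)
qed

definition csoa_step ::
  "'a::euclidean_space set \<Rightarrow> ('a \<Rightarrow> 'b \<Rightarrow> 'a) \<Rightarrow> ('i::finite \<Rightarrow> 'a \<Rightarrow> 'b \<Rightarrow> real)
   \<Rightarrow> ('i \<Rightarrow> 'a \<Rightarrow> 'b \<Rightarrow> 'a) \<Rightarrow> real \<Rightarrow> real \<Rightarrow> real \<Rightarrow> 'a \<times> (real^'i) \<Rightarrow> 'b \<Rightarrow> 'a \<times> (real^'i)" where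
  "csoa_step X gf h gh \<eta> \<delta> \<upsilon> z th =
     (closest_point X (fst z - \<eta> *\<^sub>R (gf (fst z) th + (\<Sum>i\<in>UNIV. (snd z $ i) *\<^sub>R gh i (fst z) th))),
      \<chi> i. max 0 ((1 - \<eta>\<^sup>2 * \<delta>) * (snd z $ i) + \<eta> * (h i (fst z) th + \<upsilon>)))"

lemma csoa_Suc_step:
  "csoa X gf h gh \<eta> \<delta> \<upsilon> x1 ths (Suc t) = csoa_step X gf h gh \<eta> \<delta> \<upsilon> (csoa X gf h gh \<eta> \<delta> \<upsilon> x1 ths t) (ths t)"
  by (simp add: csoa_step_def split_beta Let_def)

lemma csoa_prefix_cong:
  "(\<And>k. k < t \<Longrightarrow> ths k = ths' k) \<Longrightarrow>
     csoa X gf h gh \<eta> \<delta> \<upsilon> x1 ths t = csoa X gf h gh \<eta> \<delta> \<upsilon> x1 ths' t"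
proof (induction t)
  case (Suc t)
  then show ?case by (simp del: csoa.simps(2) add: csoa_Suc_step)
qed simp

lemma csoa_mem:
  assumes "closed X" "X \<noteq> {}" "x1 \<in> X"
  shows "fst (csoa X gf h gh \<eta> \<delta> \<upsilon> x1 ths t) \<in> X"
    and "0 \<le> snd (csoa X gf h gh \<eta> \<delta> \<upsilon> x1 ths t) $ i"
  using assms
  by (cases t; simp del: csoa.simps(2) add: csoa_Suc_step csoa_step_def closest_point_in_set)+

lemma csoa_step_measurable:
  fixes X :: "'a::euclidean_space set" and h :: "'i::finite \<Rightarrow> 'a \<Rightarrow> 'b \<Rightarrow> real"
  assumes X: "convex X" "closed X" "X \<noteq> {}"
   and gf_meas: "(\<lambda>p. gf (fst p) (snd p)) \<in> borel_measurable (borel \<Otimes>\<^sub>M Th)"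
   and h_meas: "\<And>i. (\<lambda>p. h i (fst p) (snd p)) \<in> borel_measurable (borel \<Otimes>\<^sub>M Th)"
   and gh_meas: "\<And>i. (\<lambda>p. gh i (fst p) (snd p)) \<in> borel_measurable (borel \<Otimes>\<^sub>M Th)"
  shows "(\<lambda>p. csoa_step X gf h gh \<eta> \<delta> \<upsilon> (fst p) (snd p)) \<in> borel_measurable (borel \<Otimes>\<^sub>M Th)"
proof -
  let ?N = "(borel :: ('a \<times> (real^'i)) measure) \<Otimes>\<^sub>M Th"
  have m1: "(\<lambda>p. fst (fst p)) \<in> borel_measurable ?N"
    by (intro measurable_compose[OF measurable_fst borel_measurable_fst_borel])
  have m2: "(\<lambda>p. snd (fst p) $ i) \<in> borel_measurable ?N" for i
    by (intro borel_measurable_vec_nth measurable_compose[OF measurable_fst borel_measurable_snd_borel])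
  note mgf = measurable_pair_fst_borel[OF gf_meas]
   and mh = measurable_pair_fst_borel[OF h_meas]
   and mgh = measurable_pair_fst_borel[OF gh_meas]
  have cp: "closest_point X \<in> borel_measurable borel"
    by (intro borel_measurable_continuous_onI continuous_on_closest_point X)
  have "(\<lambda>p. fst (fst p) - \<eta> *\<^sub>R (gf (fst (fst p)) (snd p)
            + (\<Sum>i\<in>UNIV. (snd (fst p) $ i) *\<^sub>R gh i (fst (fst p)) (snd p)))) \<in> borel_measurable ?N"
    using m1 m2 mgf mgh by measurable
  moreover have "(\<lambda>p. \<chi> i. max 0 ((1 - \<eta>\<^sup>2 * \<delta>) * (snd (fst p) $ i) + \<eta> * (h i (fst (fst p)) (snd p) + \<upsilon>)))
      \<in> borel_measurable ?N"
    by (rule borel_measurable_vec_lambda) (use m2 mh in measurable)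
  ultimately show ?thesis unfolding csoa_step_def
    by (intro borel_measurable_Pair measurable_compose[OF _ cp])
qed

lemma csoa_measurable:
  fixes X :: "'a::euclidean_space set" and h :: "'i::finite \<Rightarrow> 'a \<Rightarrow> 'b \<Rightarrow> real"
  assumes X: "convex X" "closed X" "X \<noteq> {}"
   and gf_meas: "(\<lambda>p. gf (fst p) (snd p)) \<in> borel_measurable (borel \<Otimes>\<^sub>M Th)"
   and h_meas: "\<And>i. (\<lambda>p. h i (fst p) (snd p)) \<in> borel_measurable (borel \<Otimes>\<^sub>M Th)"
   and gh_meas: "\<And>i. (\<lambda>p. gh i (fst p) (snd p)) \<in> borel_measurable (borel \<Otimes>\<^sub>M Th)"
   and "t \<le> n"
  shows "(\<lambda>r. csoa X gf h gh \<eta> \<delta> \<upsilon> x1 r t) \<in> borel_measurable (PiM {..<n} (\<lambda>_. Th))"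
  using \<open>t \<le> n\<close>
proof (induction t)
  case 0 then show ?case by simp
next
  case (Suc t)
  have "(\<lambda>r. r t) \<in> measurable (PiM {..<n} (\<lambda>_. Th)) Th"
    using Suc by (intro measurable_component_singleton) auto
  with Suc have "(\<lambda>r. (csoa X gf h gh \<eta> \<delta> \<upsilon> x1 r t, r t)) \<in> measurable (PiM {..<n} (\<lambda>_. Th)) (borel \<Otimes>\<^sub>M Th)"
    by (intro measurable_Pair) auto
  from measurable_compose[OF this csoa_step_measurable[OF X gf_meas h_meas gh_meas]]
  show ?case by (simp add: csoa_Suc_step del: csoa.simps(2))
qed

lemma expfun_bounded:
  fixes g :: "'a::euclidean_space \<Rightarrow> 'b \<Rightarrow> real"
  assumes "prob_space Th" and X: "convex X" and x1: "x1 \<in> X"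
   and D: "\<And>x y. x \<in> X \<Longrightarrow> y \<in> X \<Longrightarrow> dist x y \<le> D"
   and cv: "\<And>th. th \<in> space Th \<Longrightarrow> convex_on X (\<lambda>x. g x th)"
   and dg: "\<And>th x. th \<in> space Th \<Longrightarrow> x \<in> X \<Longrightarrow> ((\<lambda>y. g y th) has_derivative (\<lambda>v. gg x th \<bullet> v)) (at x)"
   and ig: "\<And>x. x \<in> X \<Longrightarrow> integrable Th (g x)"
   and igg: "\<And>x. x \<in> X \<Longrightarrow> integrable Th (\<lambda>th. (norm (gg x th))\<^sup>2)"
   and S: "\<And>x. x \<in> X \<Longrightarrow> (\<integral>th. (norm (gg x th))\<^sup>2 \<partial>Th) \<le> S"
  shows "\<exists>K. \<forall>x\<in>X. \<bar>expfun Th g x\<bar> \<le> K"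
proof -
  interpret prob_space Th by fact
  have D0: "0 \<le> D" using D[OF x1 x1] by simp
  have "\<bar>expfun Th g x - expfun Th g x1\<bar> \<le> D * (2 + 2 * S)" if x: "x \<in> X" for x
  proof -
    define n where "n z th = (norm (gg z th))\<^sup>2" for z th
    have pt: "\<bar>g x th - g x1 th\<bar> \<le> D * (2 + n x1 th + n x th)" if th: "th \<in> space Th" for th
    proof -
      have "norm v \<le> 1 + (norm v)\<^sup>2" for v :: 'a
      proof -
        have "2 * norm v \<le> 1 + (norm v)\<^sup>2"
          using sum_squares_ge_zero[of "norm v - 1" 0] by (simp add: power2_eq_square algebra_simps)
        then show ?thesis using norm_ge_zero[of v] by linarith
      qed
      then have "norm (gg x1 th) + norm (gg x th) \<le> 2 + n x1 th + n x th"
        unfolding n_def by (smt (verit))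
      moreover have "\<bar>g x th - g x1 th\<bar> \<le> norm (x - x1) * (norm (gg x1 th) + norm (gg x th))"
        using th x x1 by (intro convex_on_gradient_abs_diff_le[OF cv X] dg) auto
      moreover have "norm (x - x1) \<le> D" using D[OF x x1] by (simp add: dist_norm)
      ultimately show ?thesis
        by (smt (verit, best) mult_mono norm_ge_zero)
    qed
    have "\<bar>expfun Th g x - expfun Th g x1\<bar> = \<bar>\<integral>th. g x th - g x1 th \<partial>Th\<bar>"
      unfolding expfun_def using ig[OF x] ig[OF x1] by simp
    also have "\<dots> \<le> (\<integral>th. \<bar>g x th - g x1 th\<bar> \<partial>Th)"
      by (rule integral_abs_bound)
    also have "\<dots> \<le> (\<integral>th. D * (2 + n x1 th + n x th) \<partial>Th)"
      by (rule integral_mono) (use ig[OF x] ig[OF x1] igg[OF x] igg[OF x1] pt in \<open>auto simp: n_def\<close>)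
    also have "\<dots> = D * (2 + integral\<^sup>L Th (n x1) + integral\<^sup>L Th (n x))"
      using igg[OF x] igg[OF x1] by (simp add: prob_space n_def[abs_def])
    also have "\<dots> \<le> D * (2 + 2 * S)"
      using S[OF x1] S[OF x] D0 unfolding n_def[abs_def] by (intro mult_left_mono) auto
    finally show ?thesis .
  qed
  then have "\<forall>x\<in>X. \<bar>expfun Th g x\<bar> \<le> \<bar>expfun Th g x1\<bar> + D * (2 + 2 * S)"
    by force
  then show ?thesis by blast
qed

lemma expfun_borel_measurable:
  assumes "sigma_finite_measure Th" "(\<lambda>p. g (fst p) (snd p)) \<in> borel_measurable (borel \<Otimes>\<^sub>M Th)"
  shows "expfun Th g \<in> borel_measurable borel"
proof -
  interpret sigma_finite_measure Th by fact
  have "case_prod g = (\<lambda>p. g (fst p) (snd p))" by auto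
  then show ?thesis
    using borel_measurable_lebesgue_integral[of g borel] assms(2) by (simp add: expfun_def[abs_def])
qed

locale csoa_setting =
  fixes X :: "'a::euclidean_space set"
    and M :: "'w measure" and Th :: "'b measure" and \<theta> :: "nat \<Rightarrow> 'w \<Rightarrow> 'b"
    and f :: "'a \<Rightarrow> 'b \<Rightarrow> real" and gf :: "'a \<Rightarrow> 'b \<Rightarrow> 'a"
    and h :: "'i::finite \<Rightarrow> 'a \<Rightarrow> 'b \<Rightarrow> real" and gh :: "'i \<Rightarrow> 'a \<Rightarrow> 'b \<Rightarrow> 'a"
    and \<sigma>f \<sigma>h \<sigma>l D \<upsilon> \<eta> \<delta> B P :: real
    and xstar x1 :: 'a and lam :: "real^'i"
  assumes X: "compact X" "convex X" "X \<noteq> {}"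
    and M: "prob_space M"
    and \<theta>_meas: "\<And>t. \<theta> t \<in> measurable M Th"
    and \<theta>_indep: "prob_space.indep_vars M (\<lambda>_. Th) \<theta> UNIV"
    and \<theta>_distr: "\<And>t. distr M Th (\<theta> t) = Th"
    and f_conv: "\<And>th. th \<in> space Th \<Longrightarrow> convex_on X (\<lambda>x. f x th)"
    and f_diff: "\<And>th x. th \<in> space Th \<Longrightarrow> x \<in> X \<Longrightarrow>
                   ((\<lambda>y. f y th) has_derivative (\<lambda>v. gf x th \<bullet> v)) (at x)"
    and h_conv: "\<And>i th. th \<in> space Th \<Longrightarrow> convex_on X (\<lambda>x. h i x th)"
    and h_diff: "\<And>i th x. th \<in> space Th \<Longrightarrow> x \<in> X \<Longrightarrow>
                   ((\<lambda>y. h i y th) has_derivative (\<lambda>v. gh i x th \<bullet> v)) (at x)"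
    and f_meas: "(\<lambda>p. f (fst p) (snd p)) \<in> borel_measurable (borel \<Otimes>\<^sub>M Th)"
    and gf_meas: "(\<lambda>p. gf (fst p) (snd p)) \<in> borel_measurable (borel \<Otimes>\<^sub>M Th)"
    and h_meas: "\<And>i. (\<lambda>p. h i (fst p) (snd p)) \<in> borel_measurable (borel \<Otimes>\<^sub>M Th)"
    and gh_meas: "\<And>i. (\<lambda>p. gh i (fst p) (snd p)) \<in> borel_measurable (borel \<Otimes>\<^sub>M Th)"
    and f_int: "\<And>x. x \<in> X \<Longrightarrow> integrable Th (f x)"
    and \<sigma>_nonneg: "\<sigma>f \<ge> 0" "\<sigma>h \<ge> 0" "\<sigma>l \<ge> 0"
    and A1f: "\<And>x. x \<in> X \<Longrightarrow> (\<integral>\<^sup>+ th. ennreal ((norm (gf x th))\<^sup>2) \<partial>Th) \<le> ennreal (\<sigma>f\<^sup>2)"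
    and A1h: "\<And>i x. x \<in> X \<Longrightarrow> (\<integral>\<^sup>+ th. ennreal ((norm (gh i x th))\<^sup>2) \<partial>Th) \<le> ennreal (\<sigma>h\<^sup>2)"
    and A2: "\<And>i x. x \<in> X \<Longrightarrow> (\<integral>\<^sup>+ th. ennreal ((h i x th)\<^sup>2) \<partial>Th) \<le> ennreal (\<sigma>l\<^sup>2)"
    and A3: "\<And>x y. x \<in> X \<Longrightarrow> y \<in> X \<Longrightarrow> dist x y \<le> D"
    and \<upsilon>: "0 \<le> \<upsilon>" "\<upsilon> < \<sigma>l"
    and B_def: "B = max \<sigma>f (\<sigma>h * sqrt (real CARD('i)))"
    and P_def: "P = B\<^sup>2 + 4 * real CARD('i) * \<sigma>l\<^sup>2"
    and \<eta>: "\<eta> > 0" "\<eta> < 1 / (4 * B)"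
    and \<delta>_def: "\<delta> = 4 * B\<^sup>2"
    and x1: "x1 \<in> X"
    and xstar: "xstar \<in> X" "\<And>i. expfun Th (h i) xstar + \<upsilon> \<le> 0"
    and lam: "\<And>i. lam $ i \<ge> 0"
begin

definition potential :: "'a \<times> (real^'i) \<Rightarrow> real" where
  "potential z = (norm (fst z - xstar))\<^sup>2 + (norm (snd z - lam))\<^sup>2"

definition lagrangian :: "'a \<Rightarrow> real^'i \<Rightarrow> 'b \<Rightarrow> real" where
  "lagrangian x l th = f x th + (\<Sum>i\<in>UNIV. l$i * (h i x th + \<upsilon>)) - \<delta> * \<eta> / 2 * (norm l)\<^sup>2"

definition grad_sq_bound :: "'a \<Rightarrow> real^'i \<Rightarrow> 'b \<Rightarrow> real" where
  "grad_sq_bound x l th = 2 * (norm (gf x th))\<^sup>2 + 2 * (norm l)\<^sup>2 * (\<Sum>i\<in>UNIV. (norm (gh i x th))\<^sup>2)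
     + (\<Sum>i\<in>UNIV. 4 * (h i x th)\<^sup>2 + 4 * \<upsilon>\<^sup>2 + 2 * \<delta>\<^sup>2 * \<eta>\<^sup>2 * (l$i)\<^sup>2)"

definition gap :: "'a \<Rightarrow> real" where
  "gap x = expfun Th f x - expfun Th f xstar + (\<Sum>i\<in>UNIV. lam$i * (expfun Th (h i) x + \<upsilon>))"

lemma X_closed: "closed X"
  using X compact_imp_closed by blast

lemma Th_prob_space: "prob_space Th"
  using prob_space.prob_space_distr[OF M \<theta>_meas[of 0]] \<theta>_distr[of 0] by simp

lemma delta_nonneg: "0 \<le> \<delta>"
  by (simp add: \<delta>_def)

lemma potential_nonneg: "0 \<le> potential z"
  by (simp add: potential_def)

lemma primal_step_le:
  assumes th: "th \<in> space Th" and x: "x \<in> X" and l: "\<And>i. 0 \<le> l$i"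
  shows "(norm (closest_point X (x - \<eta> *\<^sub>R (gf x th + (\<Sum>i\<in>UNIV. l$i *\<^sub>R gh i x th))) - xstar))\<^sup>2
    \<le> (norm (x - xstar))\<^sup>2 - 2 * \<eta> * (f x th - f xstar th + (\<Sum>i\<in>UNIV. l$i * (h i x th - h i xstar th)))
      + \<eta>\<^sup>2 * (2 * (norm (gf x th))\<^sup>2 + 2 * (norm l)\<^sup>2 * (\<Sum>i\<in>UNIV. (norm (gh i x th))\<^sup>2))"
proof -
  define g where "g = gf x th + (\<Sum>i\<in>UNIV. l$i *\<^sub>R gh i x th)"
  have "f x th + gf x th \<bullet> (xstar - x) \<le> f xstar th"
    by (rule convex_on_has_derivative_imp_above_tangent[OF f_conv[OF th] X(2) x xstar(1) f_diff[OF th x]])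
  moreover have "h i x th + gh i x th \<bullet> (xstar - x) \<le> h i xstar th" for i
    by (rule convex_on_has_derivative_imp_above_tangent[OF h_conv[OF th] X(2) x xstar(1) h_diff[OF th x]])
  ultimately have "g \<bullet> (xstar - x) \<le> f xstar th - f x th + (\<Sum>i\<in>UNIV. l$i * (h i xstar th - h i x th))"
    unfolding g_def inner_add_left inner_sum_left inner_scaleR_left
    using l by (intro add_mono sum_mono mult_left_mono) (auto simp: algebra_simps)
  also have "\<dots> = - (f x th - f xstar th + (\<Sum>i\<in>UNIV. l$i * (h i x th - h i xstar th)))"
    by (simp add: sum_subtractf right_diff_distrib)
  finally have "2 * \<eta> * (g \<bullet> (xstar - x))
      \<le> 2 * \<eta> * - (f x th - f xstar th + (\<Sum>i\<in>UNIV. l$i * (h i x th - h i xstar th)))"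
    using \<eta> by (intro mult_left_mono) auto
  moreover have "(norm g)\<^sup>2 \<le> 2 * (norm (gf x th))\<^sup>2 + 2 * (norm l)\<^sup>2 * (\<Sum>i\<in>UNIV. (norm (gh i x th))\<^sup>2)"
    using power2_norm_add_le[of "gf x th" "\<Sum>i\<in>UNIV. l$i *\<^sub>R gh i x th"]
      power2_norm_sum_scaleR_le[OF l, of "\<lambda>i. gh i x th"]
    unfolding g_def mult.assoc by linarith
  then have "\<eta>\<^sup>2 * (norm g)\<^sup>2 \<le> \<eta>\<^sup>2 * (2 * (norm (gf x th))\<^sup>2 + 2 * (norm l)\<^sup>2 * (\<Sum>i\<in>UNIV. (norm (gh i x th))\<^sup>2))"
    by (simp add: mult_left_mono)
  ultimately show ?thesis
    using closest_point_step_le[OF X(2) X_closed xstar(1), of x \<eta> g] unfolding g_def by linarith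
qed

lemma potential_step_pathwise:
  assumes th: "th \<in> space Th" and x: "x \<in> X" and l: "\<And>i. 0 \<le> l$i"
  shows "potential (csoa_step X gf h gh \<eta> \<delta> \<upsilon> (x, l) th)
    \<le> potential (x, l) - 2 * \<eta> * (lagrangian x lam th - lagrangian xstar l th) + \<eta>\<^sup>2 * grad_sq_bound x l th"
proof -
  have lagrangian_diff: "lagrangian x lam th - lagrangian xstar l th
      = f x th - f xstar th + (\<Sum>i\<in>UNIV. l$i * (h i x th - h i xstar th))
        + (\<Sum>i\<in>UNIV. (lam$i - l$i) * (h i x th + \<upsilon>) - \<delta> * \<eta> / 2 * ((lam$i)\<^sup>2 - (l$i)\<^sup>2))"
    unfolding lagrangian_def power2_norm_vec
    by (simp add: sum.distrib sum_subtractf sum_distrib_left algebra_simps)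
  have "potential (csoa_step X gf h gh \<eta> \<delta> \<upsilon> (x, l) th)
      = (norm (closest_point X (x - \<eta> *\<^sub>R (gf x th + (\<Sum>i\<in>UNIV. l$i *\<^sub>R gh i x th))) - xstar))\<^sup>2
        + (norm ((\<chi> i. max 0 ((1 - \<eta>\<^sup>2 * \<delta>) * l$i + \<eta> * (h i x th + \<upsilon>))) - lam))\<^sup>2"
    by (simp add: potential_def csoa_step_def)
  also note add_mono[OF primal_step_le[OF th x l]
      projected_ascent_step_vec_le[OF lam delta_nonneg, where a = "\<lambda>i. h i x th" and l = l and \<eta> = \<eta> and \<upsilon> = \<upsilon>]]
  also have "(norm (x - xstar))\<^sup>2 - 2 * \<eta> * (f x th - f xstar th + (\<Sum>i\<in>UNIV. l$i * (h i x th - h i xstar th)))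
      + \<eta>\<^sup>2 * (2 * (norm (gf x th))\<^sup>2 + 2 * (norm l)\<^sup>2 * (\<Sum>i\<in>UNIV. (norm (gh i x th))\<^sup>2))
    + ((norm (l - lam))\<^sup>2 - 2 * \<eta> * (\<Sum>i\<in>UNIV. (lam$i - l$i) * (h i x th + \<upsilon>) - \<delta> * \<eta> / 2 * ((lam$i)\<^sup>2 - (l$i)\<^sup>2))
      + \<eta>\<^sup>2 * (\<Sum>i\<in>UNIV. 4 * (h i x th)\<^sup>2 + 4 * \<upsilon>\<^sup>2 + 2 * \<delta>\<^sup>2 * \<eta>\<^sup>2 * (l$i)\<^sup>2))
    = potential (x, l) - 2 * \<eta> * (lagrangian x lam th - lagrangian xstar l th) + \<eta>\<^sup>2 * grad_sq_bound x l th"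
    unfolding lagrangian_diff potential_def grad_sq_bound_def by (simp add: algebra_simps)
  finally show ?thesis .
qed

lemma B_pos: "0 < B"
  \<comment> \<open>for \<open>B = 0\<close> the bound \<open>\<eta> < 1 / (4 * B) = 0\<close> would contradict \<open>\<eta> > 0\<close>\<close>
  using B_def \<sigma>_nonneg \<eta> by (cases "B = 0") (auto simp: le_max_iff_disj)

lemma sigma_f_sq_le: "\<sigma>f\<^sup>2 \<le> B\<^sup>2"
  using B_def \<sigma>_nonneg by (simp add: power_mono)

lemma card_sigma_h_sq_le: "real CARD('i) * \<sigma>h\<^sup>2 \<le> B\<^sup>2"
proof -
  have "(\<sigma>h * sqrt (real CARD('i)))\<^sup>2 \<le> B\<^sup>2"
    using B_def \<sigma>_nonneg by (intro power_mono) auto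
  then show ?thesis by (simp add: power_mult_distrib mult.commute)
qed

lemma delta_eta_sq_le: "\<delta>\<^sup>2 * \<eta>\<^sup>2 \<le> B\<^sup>2"
proof -
  have "4 * B * \<eta> < 1" using \<eta> B_pos by (simp add: field_simps)
  then have "\<delta> * \<eta> \<le> B" using B_pos by (simp add: \<delta>_def power2_eq_square)
  then have "(\<delta> * \<eta>)\<^sup>2 \<le> B\<^sup>2" using \<eta> delta_nonneg by (intro power_mono) auto
  then show ?thesis by (simp add: power_mult_distrib)
qed

lemma
  assumes "x \<in> X"
  shows integrable_norm_gf_sq: "integrable Th (\<lambda>th. (norm (gf x th))\<^sup>2)"
    and integral_norm_gf_sq_le: "(\<integral>th. (norm (gf x th))\<^sup>2 \<partial>Th) \<le> \<sigma>f\<^sup>2"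
    and integrable_norm_gh_sq: "integrable Th (\<lambda>th. (norm (gh i x th))\<^sup>2)"
    and integral_norm_gh_sq_le: "(\<integral>th. (norm (gh i x th))\<^sup>2 \<partial>Th) \<le> \<sigma>h\<^sup>2"
    and integrable_h_sq: "integrable Th (\<lambda>th. (h i x th)\<^sup>2)"
    and integral_h_sq_le: "(\<integral>th. (h i x th)\<^sup>2 \<partial>Th) \<le> \<sigma>l\<^sup>2"
proof -
  have "gf x \<in> borel_measurable Th" "gh i x \<in> borel_measurable Th" "h i x \<in> borel_measurable Th"
    using measurable_Pair2[OF gf_meas, of x] measurable_Pair2[OF gh_meas[of i], of x]
      measurable_Pair2[OF h_meas[of i], of x] by simp_all
  then have "(\<lambda>th. (norm (gf x th))\<^sup>2) \<in> borel_measurable Th" "(\<lambda>th. (norm (gh i x th))\<^sup>2) \<in> borel_measurable Th"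
      "(\<lambda>th. (h i x th)\<^sup>2) \<in> borel_measurable Th"
    by measurable
  from integrable_nonneg_nn_integral_le[OF this(1) zero_le_power2 A1f[OF assms] zero_le_power2]
    integrable_nonneg_nn_integral_le[OF this(2) zero_le_power2 A1h[OF assms] zero_le_power2]
    integrable_nonneg_nn_integral_le[OF this(3) zero_le_power2 A2[OF assms] zero_le_power2]
  show "integrable Th (\<lambda>th. (norm (gf x th))\<^sup>2)" "(\<integral>th. (norm (gf x th))\<^sup>2 \<partial>Th) \<le> \<sigma>f\<^sup>2"
    "integrable Th (\<lambda>th. (norm (gh i x th))\<^sup>2)" "(\<integral>th. (norm (gh i x th))\<^sup>2 \<partial>Th) \<le> \<sigma>h\<^sup>2"
    "integrable Th (\<lambda>th. (h i x th)\<^sup>2)" "(\<integral>th. (h i x th)\<^sup>2 \<partial>Th) \<le> \<sigma>l\<^sup>2"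
    by blast+
qed

lemma integrable_h:
  assumes "x \<in> X"
  shows "integrable Th (h i x)"
proof -
  interpret prob_space Th by (rule Th_prob_space)
  have "h i x \<in> borel_measurable Th"
    using measurable_Pair2[OF h_meas[of i], of x] by simp
  then show ?thesis
    using integrable_h_sq[OF assms] by (rule square_integrable_imp_integrable)
qed

lemma integral_grad_sq_bound_le:
  assumes "x \<in> X"
  shows "integrable Th (grad_sq_bound x l)"
    and "(\<integral>th. grad_sq_bound x l th \<partial>Th) \<le> 2 * P + 4 * B\<^sup>2 * (norm l)\<^sup>2"
proof -
  interpret prob_space Th by (rule Th_prob_space)
  note integrable[simp] = integrable_norm_gf_sq[OF assms] integrable_norm_gh_sq[OF assms] integrable_h_sq[OF assms]
  show "integrable Th (grad_sq_bound x l)"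
    unfolding grad_sq_bound_def by simp
  have "(\<Sum>i\<in>UNIV. (\<integral>th. (norm (gh i x th))\<^sup>2 \<partial>Th)) \<le> real CARD('i) * \<sigma>h\<^sup>2"
    using sum_mono[of UNIV "\<lambda>i. (\<integral>th. (norm (gh i x th))\<^sup>2 \<partial>Th)" "\<lambda>_. \<sigma>h\<^sup>2"]
      integral_norm_gh_sq_le[OF assms] by simp
  then have gh: "2 * (norm l)\<^sup>2 * (\<Sum>i\<in>UNIV. (\<integral>th. (norm (gh i x th))\<^sup>2 \<partial>Th)) \<le> 2 * (norm l)\<^sup>2 * B\<^sup>2"
    using card_sigma_h_sq_le by (intro mult_left_mono) auto
  have "(\<Sum>i\<in>UNIV. 4 * (\<integral>th. (h i x th)\<^sup>2 \<partial>Th) + 4 * \<upsilon>\<^sup>2 + 2 * \<delta>\<^sup>2 * \<eta>\<^sup>2 * (l$i)\<^sup>2)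
      \<le> (\<Sum>i\<in>UNIV. 8 * \<sigma>l\<^sup>2 + 2 * \<delta>\<^sup>2 * \<eta>\<^sup>2 * (l$i)\<^sup>2)"
  proof (intro sum_mono)
    fix i
    have "\<upsilon>\<^sup>2 \<le> \<sigma>l\<^sup>2" using \<upsilon> by (intro power_mono) auto
    then show "4 * (\<integral>th. (h i x th)\<^sup>2 \<partial>Th) + 4 * \<upsilon>\<^sup>2 + 2 * \<delta>\<^sup>2 * \<eta>\<^sup>2 * (l$i)\<^sup>2
        \<le> 8 * \<sigma>l\<^sup>2 + 2 * \<delta>\<^sup>2 * \<eta>\<^sup>2 * (l$i)\<^sup>2"
      using integral_h_sq_le[OF assms, of i] by linarith
  qed
  also have "\<dots> = 8 * real CARD('i) * \<sigma>l\<^sup>2 + 2 * (\<delta>\<^sup>2 * \<eta>\<^sup>2) * (norm l)\<^sup>2"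
    by (simp add: sum.distrib power2_norm_vec sum_distrib_left mult.assoc)
  also have "\<dots> \<le> 8 * real CARD('i) * \<sigma>l\<^sup>2 + 2 * B\<^sup>2 * (norm l)\<^sup>2"
    using delta_eta_sq_le by (simp add: mult_right_mono)
  finally have h: "(\<Sum>i\<in>UNIV. 4 * (\<integral>th. (h i x th)\<^sup>2 \<partial>Th) + 4 * \<upsilon>\<^sup>2 + 2 * \<delta>\<^sup>2 * \<eta>\<^sup>2 * (l$i)\<^sup>2)
      \<le> 8 * real CARD('i) * \<sigma>l\<^sup>2 + 2 * B\<^sup>2 * (norm l)\<^sup>2" .
  have "(\<integral>th. grad_sq_bound x l th \<partial>Th) = 2 * (\<integral>th. (norm (gf x th))\<^sup>2 \<partial>Th)
      + 2 * (norm l)\<^sup>2 * (\<Sum>i\<in>UNIV. (\<integral>th. (norm (gh i x th))\<^sup>2 \<partial>Th))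
      + (\<Sum>i\<in>UNIV. 4 * (\<integral>th. (h i x th)\<^sup>2 \<partial>Th) + 4 * \<upsilon>\<^sup>2 + 2 * \<delta>\<^sup>2 * \<eta>\<^sup>2 * (l$i)\<^sup>2)"
    unfolding grad_sq_bound_def by (simp add: prob_space)
  then have "(\<integral>th. grad_sq_bound x l th \<partial>Th)
      \<le> 2 * \<sigma>f\<^sup>2 + 2 * (norm l)\<^sup>2 * B\<^sup>2 + (8 * real CARD('i) * \<sigma>l\<^sup>2 + 2 * B\<^sup>2 * (norm l)\<^sup>2)"
    using gh h integral_norm_gf_sq_le[OF assms] by linarith
  then show "(\<integral>th. grad_sq_bound x l th \<partial>Th) \<le> 2 * P + 4 * B\<^sup>2 * (norm l)\<^sup>2"
    using sigma_f_sq_le by (simp add: P_def algebra_simps)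
qed

lemma integral_lagrangian_diff_ge:
  assumes x: "x \<in> X" and l: "\<And>i. 0 \<le> l$i"
  shows "integrable Th (\<lambda>th. lagrangian x lam th - lagrangian xstar l th)"
    and "gap x - \<delta> * \<eta> / 2 * (norm lam)\<^sup>2 + \<delta> * \<eta> / 2 * (norm l)\<^sup>2
           \<le> (\<integral>th. lagrangian x lam th - lagrangian xstar l th \<partial>Th)"
proof -
  interpret prob_space Th by (rule Th_prob_space)
  note integrable[simp] = f_int[OF x] f_int[OF xstar(1)] integrable_h[OF x] integrable_h[OF xstar(1)]
  show "integrable Th (\<lambda>th. lagrangian x lam th - lagrangian xstar l th)"
    unfolding lagrangian_def by simp
  have "(\<Sum>i\<in>UNIV. l$i * (expfun Th (h i) xstar + \<upsilon>)) \<le> 0"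
    using l xstar(2) by (intro sum_nonpos mult_nonneg_nonpos) auto
  moreover have "(\<integral>th. lagrangian x lam th - lagrangian xstar l th \<partial>Th)
      = gap x - (\<Sum>i\<in>UNIV. l$i * (expfun Th (h i) xstar + \<upsilon>))
        - \<delta> * \<eta> / 2 * (norm lam)\<^sup>2 + \<delta> * \<eta> / 2 * (norm l)\<^sup>2"
    unfolding lagrangian_def gap_def expfun_def by (simp add: prob_space)
  ultimately show "gap x - \<delta> * \<eta> / 2 * (norm lam)\<^sup>2 + \<delta> * \<eta> / 2 * (norm l)\<^sup>2
           \<le> (\<integral>th. lagrangian x lam th - lagrangian xstar l th \<partial>Th)"
    by linarith
qed

lemma potential_step_nn_integral:
  assumes x: "x \<in> X" and l: "\<And>i. 0 \<le> l$i"
  shows "(\<integral>\<^sup>+th. ennreal (potential (csoa_step X gf h gh \<eta> \<delta> \<upsilon> (x, l) th)) \<partial>Th)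
           \<le> ennreal (potential (x, l) + 2 * \<eta> * (P * \<eta> + \<delta> * \<eta> / 2 * (norm lam)\<^sup>2 - gap x))"
    and "0 \<le> potential (x, l) + 2 * \<eta> * (P * \<eta> + \<delta> * \<eta> / 2 * (norm lam)\<^sup>2 - gap x)"
proof -
  interpret prob_space Th by (rule Th_prob_space)
  define bound where "bound th = potential (x, l) - 2 * \<eta> * (lagrangian x lam th - lagrangian xstar l th)
      + \<eta>\<^sup>2 * grad_sq_bound x l th" for th
  have pathwise: "potential (csoa_step X gf h gh \<eta> \<delta> \<upsilon> (x, l) th) \<le> bound th" if "th \<in> space Th" for th
    unfolding bound_def by (rule potential_step_pathwise[OF that x l])
  have bound_nonneg: "AE th in Th. 0 \<le> bound th"
    using pathwise potential_nonneg order_trans by blast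
  note integral_lagrangian_diff_ge[OF x l] integral_grad_sq_bound_le[OF x, of l]
  then have integrable_bound: "integrable Th bound"
    unfolding bound_def by simp
  have "integral\<^sup>L Th bound = potential (x, l) - 2 * \<eta> * (\<integral>th. lagrangian x lam th - lagrangian xstar l th \<partial>Th)
      + \<eta>\<^sup>2 * (\<integral>th. grad_sq_bound x l th \<partial>Th)"
    unfolding bound_def using integral_lagrangian_diff_ge(1)[OF x l] integral_grad_sq_bound_le(1)[OF x, of l]
    by (simp add: prob_space)
  also have "\<dots> \<le> potential (x, l)
      - 2 * \<eta> * (gap x - \<delta> * \<eta> / 2 * (norm lam)\<^sup>2 + \<delta> * \<eta> / 2 * (norm l)\<^sup>2)
      + \<eta>\<^sup>2 * (2 * P + 4 * B\<^sup>2 * (norm l)\<^sup>2)"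
    using integral_lagrangian_diff_ge(2)[OF x l] integral_grad_sq_bound_le(2)[OF x, of l] \<eta>
    by (intro add_mono diff_mono mult_left_mono) auto
  also have "\<dots> = potential (x, l) + 2 * \<eta> * (P * \<eta> + \<delta> * \<eta> / 2 * (norm lam)\<^sup>2 - gap x)"
    by (simp add: \<delta>_def power2_eq_square algebra_simps)
  finally have integral_bound: "integral\<^sup>L Th bound \<le> \<dots>" .
  have "(\<integral>\<^sup>+th. ennreal (potential (csoa_step X gf h gh \<eta> \<delta> \<upsilon> (x, l) th)) \<partial>Th)
      \<le> (\<integral>\<^sup>+th. ennreal (bound th) \<partial>Th)"
    by (intro nn_integral_mono ennreal_leI pathwise)
  also have "\<dots> = ennreal (integral\<^sup>L Th bound)"
    by (rule nn_integral_eq_integral[OF integrable_bound bound_nonneg])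
  finally show "(\<integral>\<^sup>+th. ennreal (potential (csoa_step X gf h gh \<eta> \<delta> \<upsilon> (x, l) th)) \<partial>Th)
           \<le> ennreal (potential (x, l) + 2 * \<eta> * (P * \<eta> + \<delta> * \<eta> / 2 * (norm lam)\<^sup>2 - gap x))"
    using integral_bound by (simp add: ennreal_leI order_trans)
  show "0 \<le> potential (x, l) + 2 * \<eta> * (P * \<eta> + \<delta> * \<eta> / 2 * (norm lam)\<^sup>2 - gap x)"
    using integral_nonneg_AE[OF bound_nonneg] integral_bound by linarith
qed

definition state :: "nat \<Rightarrow> 'w \<Rightarrow> 'a \<times> (real^'i)" where
  "state t \<omega> = csoa X gf h gh \<eta> \<delta> \<upsilon> x1 (\<lambda>k. \<theta> k \<omega>) t"

lemma state_Suc: "state (Suc t) \<omega> = csoa_step X gf h gh \<eta> \<delta> \<upsilon> (state t \<omega>) (\<theta> t \<omega>)"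
  unfolding state_def by (rule csoa_Suc_step)

lemma state_mem: "fst (state t \<omega>) \<in> X" "0 \<le> snd (state t \<omega>) $ i"
  unfolding state_def using csoa_mem[OF X_closed X(3) x1] by blast+

lemma state_eq_restrict: "state t \<omega> = csoa X gf h gh \<eta> \<delta> \<upsilon> x1 (restrict (\<lambda>k. \<theta> k \<omega>) {..<t}) t"
  unfolding state_def by (rule csoa_prefix_cong) simp

lemma csoa_measurable_samples:
  "t \<le> n \<Longrightarrow> (\<lambda>r. csoa X gf h gh \<eta> \<delta> \<upsilon> x1 r t) \<in> borel_measurable (PiM {..<n} (\<lambda>_. Th))"
  by (rule csoa_measurable[OF X(2) X_closed X(3) gf_meas h_meas gh_meas])

lemma state_measurable: "state t \<in> borel_measurable M"
proof -
  have "(\<lambda>\<omega>. restrict (\<lambda>k. \<theta> k \<omega>) {..<t}) \<in> measurable M (PiM {..<t} (\<lambda>_. Th))"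
    by (intro measurable_restrict \<theta>_meas)
  from measurable_comp[OF this csoa_measurable_samples[OF order_refl]] show ?thesis
    by (simp add: comp_def state_eq_restrict[abs_def])
qed

lemma iterate_measurable: "(\<lambda>\<omega>. fst (state t \<omega>)) \<in> borel_measurable M"
  using measurable_compose[OF state_measurable borel_measurable_fst_borel] by simp

lemma integrable_expfun_iterate:
  assumes bounded: "\<exists>K. \<forall>x\<in>X. \<bar>expfun Th g x\<bar> \<le> K"
    and g_meas: "(\<lambda>p. g (fst p) (snd p)) \<in> borel_measurable (borel \<Otimes>\<^sub>M Th)"
  shows "integrable M (\<lambda>\<omega>. expfun Th g (fst (state t \<omega>)))"
proof -
  interpret prob_space M by (rule M)
  obtain K where K: "\<And>x. x \<in> X \<Longrightarrow> \<bar>expfun Th g x\<bar> \<le> K" using bounded by blast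
  have "expfun Th g \<in> borel_measurable borel"
    using expfun_borel_measurable[OF prob_space_imp_sigma_finite[OF Th_prob_space] g_meas] .
  from measurable_compose[OF iterate_measurable this] show ?thesis
    by (intro integrable_const_bound[where B = K]) (auto intro: K state_mem)
qed

lemma integrable_F_iterate: "integrable M (\<lambda>\<omega>. expfun Th f (fst (state t \<omega>)))"
  by (rule integrable_expfun_iterate[OF _ f_meas])
     (rule expfun_bounded[OF Th_prob_space X(2) x1 A3 f_conv f_diff f_int integrable_norm_gf_sq integral_norm_gf_sq_le])

lemma integrable_H_iterate: "integrable M (\<lambda>\<omega>. expfun Th (h i) (fst (state t \<omega>)))"
  by (rule integrable_expfun_iterate[OF _ h_meas])
     (rule expfun_bounded[OF Th_prob_space X(2) x1 A3 h_conv h_diff integrable_h integrable_norm_gh_sq integral_norm_gh_sq_le])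

lemma integrable_gap_iterate: "integrable M (\<lambda>\<omega>. gap (fst (state t \<omega>)))"
proof -
  interpret prob_space M by (rule M)
  show ?thesis
    unfolding gap_def using integrable_F_iterate integrable_H_iterate by simp
qed

lemma potential_borel_measurable: "potential \<in> borel_measurable borel"
  unfolding potential_def[abs_def] by (intro borel_measurable_continuous_onI continuous_intros)

lemma nn_integral_potential_state_Suc:
  "(\<integral>\<^sup>+\<omega>. ennreal (potential (state (Suc t) \<omega>)) \<partial>M)
     = (\<integral>\<^sup>+\<omega>. (\<integral>\<^sup>+th. ennreal (potential (csoa_step X gf h gh \<eta> \<delta> \<upsilon> (state t \<omega>) th)) \<partial>Th) \<partial>M)"
proof -
  interpret prob_space M by (rule M)
  have "(\<lambda>p. ennreal (potential (csoa_step X gf h gh \<eta> \<delta> \<upsilon> (fst p) (snd p))))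
      \<in> borel_measurable ((borel :: ('a \<times> (real^'i)) measure) \<Otimes>\<^sub>M Th)"
    using measurable_compose[OF csoa_step_measurable[OF X(2) X_closed X(3) gf_meas h_meas gh_meas]
        potential_borel_measurable]
    by measurable
  from nn_integral_indep_next_sample[OF \<theta>_meas \<theta>_indep \<theta>_distr csoa_measurable_samples[OF order_refl] this]
  show ?thesis by (simp add: state_Suc state_eq_restrict[of t])
qed

lemma expected_potential_step:
  assumes "integrable M (\<lambda>\<omega>. potential (state t \<omega>))"
  shows "integrable M (\<lambda>\<omega>. potential (state (Suc t) \<omega>))"
    and "(\<integral>\<omega>. potential (state (Suc t) \<omega>) \<partial>M) \<le> (\<integral>\<omega>. potential (state t \<omega>) \<partial>M)
           + 2 * \<eta> * (P * \<eta> + \<delta> * \<eta> / 2 * (norm lam)\<^sup>2 - (\<integral>\<omega>. gap (fst (state t \<omega>)) \<partial>M))"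
proof -
  interpret prob_space M by (rule M)
  define bound where "bound \<omega> = potential (state t \<omega>)
      + 2 * \<eta> * (P * \<eta> + \<delta> * \<eta> / 2 * (norm lam)\<^sup>2 - gap (fst (state t \<omega>)))" for \<omega>
  have step: "(\<integral>\<^sup>+th. ennreal (potential (csoa_step X gf h gh \<eta> \<delta> \<upsilon> (state t \<omega>) th)) \<partial>Th) \<le> ennreal (bound \<omega>)"
      "0 \<le> bound \<omega>" for \<omega>
    using potential_step_nn_integral[OF state_mem(1)[of t \<omega>] state_mem(2)[of t \<omega>]]
    by (simp_all add: bound_def)
  have integrable_bound: "integrable M bound"
    unfolding bound_def using assms integrable_gap_iterate by simp
  have "(\<integral>\<^sup>+\<omega>. ennreal (potential (state (Suc t) \<omega>)) \<partial>M)
      = (\<integral>\<^sup>+\<omega>. (\<integral>\<^sup>+th. ennreal (potential (csoa_step X gf h gh \<eta> \<delta> \<upsilon> (state t \<omega>) th)) \<partial>Th) \<partial>M)"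
    by (rule nn_integral_potential_state_Suc)
  also have "\<dots> \<le> (\<integral>\<^sup>+\<omega>. ennreal (bound \<omega>) \<partial>M)"
    by (intro nn_integral_mono step)
  also have "\<dots> = ennreal (integral\<^sup>L M bound)"
    by (intro nn_integral_eq_integral integrable_bound AE_I2 step)
  finally have "(\<integral>\<^sup>+\<omega>. ennreal (potential (state (Suc t) \<omega>)) \<partial>M) \<le> ennreal (integral\<^sup>L M bound)" .
  from integrable_nonneg_nn_integral_le[OF measurable_compose[OF state_measurable potential_borel_measurable]
      potential_nonneg this integral_nonneg_AE[OF AE_I2[OF step(2)]]]
  have "integrable M (\<lambda>\<omega>. potential (state (Suc t) \<omega>))"
    and "(\<integral>\<omega>. potential (state (Suc t) \<omega>) \<partial>M) \<le> integral\<^sup>L M bound"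
    by simp_all
  moreover have "integral\<^sup>L M bound = (\<integral>\<omega>. potential (state t \<omega>) \<partial>M)
      + 2 * \<eta> * (P * \<eta> + \<delta> * \<eta> / 2 * (norm lam)\<^sup>2 - (\<integral>\<omega>. gap (fst (state t \<omega>)) \<partial>M))"
    unfolding bound_def using assms integrable_gap_iterate by (simp add: prob_space)
  ultimately show "integrable M (\<lambda>\<omega>. potential (state (Suc t) \<omega>))"
    and "(\<integral>\<omega>. potential (state (Suc t) \<omega>) \<partial>M) \<le> (\<integral>\<omega>. potential (state t \<omega>) \<partial>M)
           + 2 * \<eta> * (P * \<eta> + \<delta> * \<eta> / 2 * (norm lam)\<^sup>2 - (\<integral>\<omega>. gap (fst (state t \<omega>)) \<partial>M))"
    by simp_all
qed

lemma integrable_potential_state: "integrable M (\<lambda>\<omega>. potential (state t \<omega>))"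
proof (induction t)
  case 0
  interpret prob_space M by (rule M)
  show ?case by (simp add: state_def)
qed (rule expected_potential_step(1))

lemma expected_gap_sum_le:
  "2 * \<eta> * (\<Sum>t<T. \<integral>\<omega>. gap (fst (state t \<omega>)) \<partial>M)
     \<le> D\<^sup>2 + (norm lam)\<^sup>2 + 2 * \<eta> * real T * (P * \<eta> + \<delta> * \<eta> / 2 * (norm lam)\<^sup>2)"
proof -
  interpret prob_space M by (rule M)
  define E where "E t = (\<integral>\<omega>. potential (state t \<omega>) \<partial>M)" for t
  define C where "C = P * \<eta> + \<delta> * \<eta> / 2 * (norm lam)\<^sup>2"
  have "E T - E 0 = (\<Sum>t<T. E (Suc t) - E t)"
    by (simp add: sum_lessThan_telescope)
  also have "\<dots> \<le> (\<Sum>t<T. 2 * \<eta> * (C - (\<integral>\<omega>. gap (fst (state t \<omega>)) \<partial>M)))"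
    using expected_potential_step(2)[OF integrable_potential_state] unfolding E_def C_def
    by (intro sum_mono) (simp add: algebra_simps)
  also have "\<dots> = 2 * \<eta> * real T * C - 2 * \<eta> * (\<Sum>t<T. \<integral>\<omega>. gap (fst (state t \<omega>)) \<partial>M)"
    by (simp add: right_diff_distrib sum_subtractf sum_distrib_left)
  finally have "2 * \<eta> * (\<Sum>t<T. \<integral>\<omega>. gap (fst (state t \<omega>)) \<partial>M) \<le> E 0 - E T + 2 * \<eta> * real T * C"
    by linarith
  moreover have "0 \<le> E T"
    unfolding E_def by (intro integral_nonneg_AE AE_I2 potential_nonneg)
  moreover have "E 0 \<le> D\<^sup>2 + (norm lam)\<^sup>2"
    using A3[OF x1 xstar(1)] by (simp add: E_def state_def potential_def prob_space dist_norm power_mono)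
  ultimately show ?thesis unfolding C_def by linarith
qed

lemma csoa_bound:
  "(\<Sum>t<T. \<integral>\<omega>. expfun Th f (fst (csoa X gf h gh \<eta> \<delta> \<upsilon> x1 (\<lambda>k. \<theta> k \<omega>) t))
                          - expfun Th f xstar \<partial>M)
         - (2 * B\<^sup>2 * \<eta> * real T + 1 / (2 * \<eta>)) * (norm lam)\<^sup>2
         + (\<Sum>t<T. \<integral>\<omega>. (\<Sum>i\<in>UNIV. lam $ i *
               (expfun Th (h i) (fst (csoa X gf h gh \<eta> \<delta> \<upsilon> x1 (\<lambda>k. \<theta> k \<omega>) t)) + \<upsilon>)) \<partial>M)
         \<le> D\<^sup>2 / (2 * \<eta>) + P * \<eta> * real T"
proof -
  interpret prob_space M by (rule M)
  define SF where "SF = (\<Sum>t<T. \<integral>\<omega>. expfun Th f (fst (state t \<omega>)) - expfun Th f xstar \<partial>M)"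
  define SH where "SH = (\<Sum>t<T. \<integral>\<omega>. (\<Sum>i\<in>UNIV. lam $ i * (expfun Th (h i) (fst (state t \<omega>)) + \<upsilon>)) \<partial>M)"
  have gap_sum: "(\<Sum>t<T. \<integral>\<omega>. gap (fst (state t \<omega>)) \<partial>M) = SF + SH"
    unfolding SF_def SH_def gap_def sum.distrib[symmetric]
    using integrable_F_iterate integrable_H_iterate by (intro sum.cong refl integral_add) simp_all
  have regularizer: "\<delta> * \<eta> / 2 * (norm lam)\<^sup>2 = 2 * B\<^sup>2 * \<eta> * (norm lam)\<^sup>2"
    by (simp add: \<delta>_def)
  have "2 * \<eta> * (SF + SH) \<le> D\<^sup>2 + (norm lam)\<^sup>2 + 2 * \<eta> * real T * (P * \<eta> + 2 * B\<^sup>2 * \<eta> * (norm lam)\<^sup>2)"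
    using expected_gap_sum_le[of T] unfolding gap_sum regularizer .
  then have "SF + SH \<le> D\<^sup>2 / (2 * \<eta>) + (norm lam)\<^sup>2 / (2 * \<eta>) + real T * (P * \<eta> + 2 * B\<^sup>2 * \<eta> * (norm lam)\<^sup>2)"
    using \<eta> by (simp add: field_simps)
  then show ?thesis
    unfolding SF_def SH_def state_def by (simp add: algebra_simps)
qed

end


theorem lemma2:
  fixes X :: "'a::euclidean_space set"
    and M :: "'w measure" and Th :: "'b measure" and \<theta> :: "nat \<Rightarrow> 'w \<Rightarrow> 'b"
    and f :: "'a \<Rightarrow> 'b \<Rightarrow> real" and gf :: "'a \<Rightarrow> 'b \<Rightarrow> 'a"
    and h :: "'i::finite \<Rightarrow> 'a \<Rightarrow> 'b \<Rightarrow> real" and gh :: "'i \<Rightarrow> 'a \<Rightarrow> 'b \<Rightarrow> 'a"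
    and \<sigma>f \<sigma>h \<sigma>l D \<sigma> \<upsilon> \<eta> \<delta> B P :: real
    and xt xstar x1 :: 'a and T :: nat and lam :: "real^'i"
  assumes X: "compact X" "convex X" "X \<noteq> {}"
    and M: "prob_space M"
    and \<theta>_meas: "\<And>t. \<theta> t \<in> measurable M Th"
    and \<theta>_indep: "prob_space.indep_vars M (\<lambda>_. Th) \<theta> UNIV"
    and \<theta>_distr: "\<And>t. distr M Th (\<theta> t) = Th"
    and f_conv: "\<And>th. th \<in> space Th \<Longrightarrow> convex_on X (\<lambda>x. f x th)"
    and f_diff: "\<And>th x. th \<in> space Th \<Longrightarrow> x \<in> X \<Longrightarrow>
                   ((\<lambda>y. f y th) has_derivative (\<lambda>v. gf x th \<bullet> v)) (at x)"
    and h_conv: "\<And>i th. th \<in> space Th \<Longrightarrow> convex_on X (\<lambda>x. h i x th)"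
    and h_diff: "\<And>i th x. th \<in> space Th \<Longrightarrow> x \<in> X \<Longrightarrow>
                   ((\<lambda>y. h i y th) has_derivative (\<lambda>v. gh i x th \<bullet> v)) (at x)"
    and f_meas: "(\<lambda>p. f (fst p) (snd p)) \<in> borel_measurable (borel \<Otimes>\<^sub>M Th)"
    and gf_meas: "(\<lambda>p. gf (fst p) (snd p)) \<in> borel_measurable (borel \<Otimes>\<^sub>M Th)"
    and h_meas: "\<And>i. (\<lambda>p. h i (fst p) (snd p)) \<in> borel_measurable (borel \<Otimes>\<^sub>M Th)"
    and gh_meas: "\<And>i. (\<lambda>p. gh i (fst p) (snd p)) \<in> borel_measurable (borel \<Otimes>\<^sub>M Th)"
    and f_int: "\<And>x. x \<in> X \<Longrightarrow> integrable Th (f x)"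
    and \<sigma>_nonneg: "\<sigma>f \<ge> 0" "\<sigma>h \<ge> 0" "\<sigma>l \<ge> 0"
    and A1f: "\<And>x. x \<in> X \<Longrightarrow> (\<integral>\<^sup>+ th. ennreal ((norm (gf x th))\<^sup>2) \<partial>Th) \<le> ennreal (\<sigma>f\<^sup>2)"
    and A1h: "\<And>i x. x \<in> X \<Longrightarrow> (\<integral>\<^sup>+ th. ennreal ((norm (gh i x th))\<^sup>2) \<partial>Th) \<le> ennreal (\<sigma>h\<^sup>2)"
    and A2: "\<And>i x. x \<in> X \<Longrightarrow> (\<integral>\<^sup>+ th. ennreal ((h i x th)\<^sup>2) \<partial>Th) \<le> ennreal (\<sigma>l\<^sup>2)"
    and A3: "\<And>x y. x \<in> X \<Longrightarrow> y \<in> X \<Longrightarrow> dist x y \<le> D"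
    and A4: "xt \<in> X" "\<sigma> > 0" "\<And>i. expfun Th (h i) xt + \<sigma> \<le> 0"
    and \<upsilon>: "0 \<le> \<upsilon>" "\<upsilon> \<le> \<sigma> / 2" "\<upsilon> < \<sigma>l"
    and B_def: "B = max \<sigma>f (\<sigma>h * sqrt (real CARD('i)))"
    and P_def: "P = B\<^sup>2 + 4 * real CARD('i) * \<sigma>l\<^sup>2"
    and \<eta>: "\<eta> > 0" "\<eta> < 1 / (4 * B)"
    and \<delta>_def: "\<delta> = 4 * B\<^sup>2"
    and x1: "x1 \<in> X"
    and xstar: "xstar \<in> X" "\<And>i. expfun Th (h i) xstar + \<upsilon> \<le> 0"
       "\<And>x. x \<in> X \<Longrightarrow> (\<forall>i. expfun Th (h i) x + \<upsilon> \<le> 0) \<Longrightarrow> expfun Th f xstar \<le> expfun Th f x"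
    and T: "T \<ge> 1"
    and lam: "\<And>i. lam $ i \<ge> 0"
  shows "(\<Sum>t<T. \<integral>\<omega>. expfun Th f (fst (csoa X gf h gh \<eta> \<delta> \<upsilon> x1 (\<lambda>k. \<theta> k \<omega>) t))
                          - expfun Th f xstar \<partial>M)
         - (2 * B\<^sup>2 * \<eta> * real T + 1 / (2 * \<eta>)) * (norm lam)\<^sup>2
         + (\<Sum>t<T. \<integral>\<omega>. (\<Sum>i\<in>UNIV. lam $ i *
               (expfun Th (h i) (fst (csoa X gf h gh \<eta> \<delta> \<upsilon> x1 (\<lambda>k. \<theta> k \<omega>) t)) + \<upsilon>)) \<partial>M)
         \<le> D\<^sup>2 / (2 * \<eta>) + P * \<eta> * real T"
proof -
  interpret csoa_setting X M Th \<theta> f gf h gh \<sigma>f \<sigma>h \<sigma>l D \<upsilon> \<eta> \<delta> B P xstar x1 lam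
    by (rule csoa_setting.intro) (fact assms)+
  show ?thesis by (rule csoa_bound)
qed

end
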